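(* Assume Assumption (I), and let $(L_k,u_k)$ be a sequence generated by Algorithm A (with $(\epsilon_k)$ monotonically decreasing). Then for all $k$, \[ \Phi_{\epsilon_{k+1}}(u_{k+1})+\frac\alpha2\|u_{k+1}-u_k\|_V^2+\beta\int_\Omega\psi_{\epsilon_k}'(u_k^2)(u_{k+1}-u_k)^2\,dx\le\Phi_{\epsilon_k}(u_k). \]
   Context: Standing assumptions: $\Omega\subset\mathbb R^d$ bounded Lipschitz domain; $V$ real Hilbert space with inner product $\langle\cdot,\cdot\rangle_V$, $V\subset L^2(\Omega)$ with compact and dense embedding; $V^*$ dual. $F:V\to\mathbb R$ weakly lower semicontinuous, bounded below by an affine function, continuously Fréchet differentiable. $\alpha>0$, $\beta>0$, $p\in(0,1)$. Assumption (I): the standing assumptions hold; $F'$ is completely continuous ($u_n\rightharpoonup u$ in $V$ implies $F'(u_n)\to F'(u)$ in $V^*$); and $F':V\to V^*$ is Lipschitz continuous on bounded sets. For $\epsilon>0$, $\psi_\epsilon(t)=\frac p2\frac{t}{\epsilon^{2-p}}+(1-\frac p2)\epsilon^p$ if $t\in[0,\epsilon^2)$, $\psi_\epsilon(t)=t^{p/2}$ if $t\ge\epsilon^2$, $\psi_\epsilon'(t)=\frac p2\min(\epsilon^{p-2},t^{(p-2)/2})$. $G_\epsilon(u)=\int_\Omega\psi_\epsilon(|u|^2)dx$ and $\Phi_\epsilon(u)=F(u)+\frac\alpha2\|u\|_V^2+\beta G_\epsilon(u)$. Algorithm A: choose a monotonically decreasing sequence $\epsilon_k\searrow0$, constants $\gamma>1$,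 $\tilde L>0$, and $u_0\in V$. Given $u_k$, for $L\ge0$ let problem (Q$_{k,L}$) be $\min_{u\in V} F(u_k)+F'(u_k)(u-u_k)+\frac L2\|u-u_k\|_V^2+\frac\alpha2\|u\|_V^2+\beta\int_\Omega\big[\psi_{\epsilon_k}(u_k^2)+\psi_{\epsilon_k}'(u_k^2)(u^2-u_k^2)\big]dx$ (strongly convex, unique minimizer), and let (D$_{k,L}$) be the condition $F(u_{k+1})\le F(u_k)+F'(u_k)(u_{k+1}-u_k)+L\|u_{k+1}-u_k\|_V^2$ for its minimizer $u_{k+1}$. $L_k$ is the smallest $L\in\{0\}\cup\{\tilde L\gamma^l:l\ge0\}$ for which (D$_{k,L}$) holds, and $u_{k+1}$ is the corresponding minimizer; then $k\mapsto k+1$. *)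

theory Defs
  imports "HOL-Analysis.Analysis"
begin

definition lipschitz_domain :: "'a::euclidean_space set \<Rightarrow> bool" where
  "lipschitz_domain \<Omega> \<longleftrightarrow> open \<Omega> \<and> bounded \<Omega> \<and> \<Omega> \<noteq> {} \<and>
     (\<forall>x\<in>frontier \<Omega>. \<exists>e r C h. norm e = 1 \<and> r > 0 \<and>
        C-lipschitz_on {y. y \<bullet> e = 0} (h :: 'a \<Rightarrow> real) \<and>
        \<Omega> \<inter> ball x r = {y \<in> ball x r. y \<bullet> e < h (y - (y \<bullet> e) *\<^sub>R e)})"

definition L2_on :: "'a::euclidean_space set \<Rightarrow> ('a \<Rightarrow> real) \<Rightarrow> bool" where
  "L2_on \<Omega> f \<longleftrightarrow> (\<lambda>x. indicator \<Omega> x * f x) \<in> borel_measurable lebesgue \<and>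
                   set_integrable lebesgue \<Omega> (\<lambda>x. (f x)\<^sup>2)"

definition L2_dist2 :: "'a::euclidean_space set \<Rightarrow> ('a \<Rightarrow> real) \<Rightarrow> ('a \<Rightarrow> real) \<Rightarrow> real" where
  "L2_dist2 \<Omega> f g = (LINT x:\<Omega>|lebesgue. (f x - g x)\<^sup>2)"

definition compact_dense_embedding ::
  "'a::euclidean_space set \<Rightarrow> ('v::{real_inner,complete_space} \<Rightarrow> 'a \<Rightarrow> real) \<Rightarrow> bool" where
  "compact_dense_embedding \<Omega> \<iota> \<longleftrightarrow>
     (\<forall>u. L2_on \<Omega> (\<iota> u)) \<and>
     (\<forall>a b u v x. \<iota> (a *\<^sub>R u + b *\<^sub>R v) x = a * \<iota> u x + b * \<iota> v x) \<and>
     (\<forall>u. (AE x in lebesgue. x \<in> \<Omega> \<longrightarrow> \<iota> u x = 0) \<longrightarrow> u = 0) \<and>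
     (\<exists>C. \<forall>u. L2_dist2 \<Omega> (\<iota> u) (\<lambda>_. 0) \<le> C * (norm u)\<^sup>2) \<and>
     (\<forall>s::nat \<Rightarrow> 'v. bounded (range s) \<longrightarrow>
        (\<exists>r f. strict_mono r \<and> L2_on \<Omega> f \<and>
               (\<lambda>n. L2_dist2 \<Omega> (\<iota> (s (r n))) f) \<longlonglongrightarrow> 0)) \<and>
     (\<forall>f e. L2_on \<Omega> f \<longrightarrow> e > 0 \<longrightarrow> (\<exists>u. L2_dist2 \<Omega> (\<iota> u) f < e))"

definition weak_conv :: "(nat \<Rightarrow> 'v::real_inner) \<Rightarrow> 'v \<Rightarrow> bool" where
  "weak_conv s u \<longleftrightarrow> (\<forall>v. (\<lambda>n. inner (s n) v) \<longlonglongrightarrow> inner u v)"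

definition weakly_lsc :: "('v::real_inner \<Rightarrow> real) \<Rightarrow> bool" where
  "weakly_lsc F \<longleftrightarrow> (\<forall>s u. weak_conv s u \<longrightarrow>
       ereal (F u) \<le> liminf (\<lambda>n. ereal (F (s n))))"

definition bounded_below_affine :: "('v::real_normed_vector \<Rightarrow> real) \<Rightarrow> bool" where
  "bounded_below_affine F \<longleftrightarrow> (\<exists>(l::'v \<Rightarrow>\<^sub>L real) c. \<forall>u. l u + c \<le> F u)"

definition standing_F :: "('v::{real_inner,complete_space} \<Rightarrow> real) \<Rightarrow> ('v \<Rightarrow> ('v \<Rightarrow>\<^sub>L real)) \<Rightarrow> bool" where
  "standing_F F F' \<longleftrightarrow> weakly_lsc F \<and> bounded_below_affine F \<and>
     (\<forall>u. (F has_derivative blinfun_apply (F' u)) (at u)) \<and> continuous_on UNIV F'"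

definition assumption_I :: "('v::{real_inner,complete_space} \<Rightarrow> real) \<Rightarrow> ('v \<Rightarrow> ('v \<Rightarrow>\<^sub>L real)) \<Rightarrow> bool" where
  "assumption_I F F' \<longleftrightarrow> standing_F F F' \<and>
     (\<forall>s u. weak_conv s u \<longrightarrow> (\<lambda>n. F' (s n)) \<longlonglongrightarrow> F' u) \<and>
     (\<forall>B. bounded B \<longrightarrow> (\<exists>C. \<forall>x\<in>B. \<forall>y\<in>B. norm (F' x - F' y) \<le> C * dist x y))"

definition psi :: "real \<Rightarrow> real \<Rightarrow> real \<Rightarrow> real" where
  "psi p \<epsilon> t = (if t < \<epsilon>\<^sup>2 then p/2 * t / \<epsilon> powr (2 - p) + (1 - p/2) * \<epsilon> powr p
                 else t powr (p/2))"

text \<open>psi' eps t = p/2 * min(eps^(p-2), t^((p-2)/2)), written piecewise so that t = 0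
  gives eps^(p-2) (as t^((p-2)/2) = +infinity there).\<close>
definition psi' :: "real \<Rightarrow> real \<Rightarrow> real \<Rightarrow> real" where
  "psi' p \<epsilon> t = (if t < \<epsilon>\<^sup>2 then p/2 * \<epsilon> powr (p - 2) else p/2 * t powr ((p - 2)/2))"

definition G_eps :: "'a::euclidean_space set \<Rightarrow> ('v \<Rightarrow> 'a \<Rightarrow> real) \<Rightarrow> real \<Rightarrow> real \<Rightarrow> 'v \<Rightarrow> real" where
  "G_eps \<Omega> \<iota> p \<epsilon> u = (LINT x:\<Omega>|lebesgue. psi p \<epsilon> (\<bar>\<iota> u x\<bar>\<^sup>2))"

definition Phi_eps :: "'a::euclidean_space set \<Rightarrow> ('v::real_normed_vector \<Rightarrow> 'a \<Rightarrow> real) \<Rightarrow>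
    ('v \<Rightarrow> real) \<Rightarrow> real \<Rightarrow> real \<Rightarrow> real \<Rightarrow> real \<Rightarrow> 'v \<Rightarrow> real" where
  "Phi_eps \<Omega> \<iota> F \<alpha> \<beta> p \<epsilon> u = F u + \<alpha>/2 * (norm u)\<^sup>2 + \<beta> * G_eps \<Omega> \<iota> p \<epsilon> u"

definition Q_obj :: "'a::euclidean_space set \<Rightarrow> ('v::real_normed_vector \<Rightarrow> 'a \<Rightarrow> real) \<Rightarrow>
    ('v \<Rightarrow> real) \<Rightarrow> ('v \<Rightarrow> ('v \<Rightarrow>\<^sub>L real)) \<Rightarrow> real \<Rightarrow> real \<Rightarrow> real \<Rightarrow> real \<Rightarrow>
    'v \<Rightarrow> real \<Rightarrow> 'v \<Rightarrow> real" where
  "Q_obj \<Omega> \<iota> F F' \<alpha> \<beta> p \<epsilon> uk L u =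
     F uk + F' uk (u - uk) + L/2 * (norm (u - uk))\<^sup>2 + \<alpha>/2 * (norm u)\<^sup>2 +
     \<beta> * (LINT x:\<Omega>|lebesgue. psi p \<epsilon> ((\<iota> uk x)\<^sup>2) +
                              psi' p \<epsilon> ((\<iota> uk x)\<^sup>2) * ((\<iota> u x)\<^sup>2 - (\<iota> uk x)\<^sup>2))"

definition is_Q_min where
  "is_Q_min \<Omega> \<iota> F F' \<alpha> \<beta> p \<epsilon> uk L w \<longleftrightarrow>
     (\<forall>u. Q_obj \<Omega> \<iota> F F' \<alpha> \<beta> p \<epsilon> uk L w \<le> Q_obj \<Omega> \<iota> F F' \<alpha> \<beta> p \<epsilon> uk L u)"

definition descent_cond :: "('v::real_normed_vector \<Rightarrow> real) \<Rightarrow> ('v \<Rightarrow> ('v \<Rightarrow>\<^sub>L real)) \<Rightarrow>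
    'v \<Rightarrow> real \<Rightarrow> 'v \<Rightarrow> bool" where
  "descent_cond F F' uk L w \<longleftrightarrow> F w \<le> F uk + F' uk (w - uk) + L * (norm (w - uk))\<^sup>2"

definition L_candidates :: "real \<Rightarrow> real \<Rightarrow> real set" where
  "L_candidates Lt \<gamma> = {0} \<union> range (\<lambda>l::nat. Lt * \<gamma> ^ l)"

definition algorithm_A where
  "algorithm_A \<Omega> \<iota> F F' \<alpha> \<beta> p \<epsilon> \<gamma> Lt u0 L u \<longleftrightarrow>
     (\<forall>k. \<epsilon> k > 0) \<and> decseq \<epsilon> \<and> \<epsilon> \<longlonglongrightarrow> 0 \<and> \<gamma> > 1 \<and> Lt > 0 \<and> u 0 = u0 \<and>
     (\<forall>k. L k \<in> L_candidates Lt \<gamma> \<and>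
          is_Q_min \<Omega> \<iota> F F' \<alpha> \<beta> p (\<epsilon> k) (u k) (L k) (u (Suc k)) \<and>
          descent_cond F F' (u k) (L k) (u (Suc k)) \<and>
          (\<forall>L'\<in>L_candidates Lt \<gamma>. L' < L k \<longrightarrow>
              (\<forall>w. is_Q_min \<Omega> \<iota> F F' \<alpha> \<beta> p (\<epsilon> k) (u k) L' w \<longrightarrow>
                   \<not> descent_cond F F' (u k) L' w)))"

end

theory Submission
  imports Defs
begin

text \<open>With base point \<open>u\<^sub>k\<close> the subproblem objective \<open>Q_obj\<close> is a quadratic functional,
  so its value at \<open>u\<^sub>k\<close>, which is \<open>\<Phi>\<^sub>\<epsilon>\<^sub>k(u\<^sub>k)\<close>, exceeds its minimum at \<open>u\<^sub>k\<^sub>+\<^sub>1\<close> by exactly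
  the quadratic part evaluated at \<open>u\<^sub>k\<^sub>+\<^sub>1 - u\<^sub>k\<close>. On the other side, \<open>\<psi>\<^sub>\<epsilon>\<close> is the concave
  function \<open>t\<^sup>p\<^sup>/\<^sup>2\<close> with its piece below \<open>\<epsilon>\<^sup>2\<close> replaced by the tangent line at \<open>\<epsilon>\<^sup>2\<close>; hence it
  lies below each of its tangents and is increasing in \<open>\<epsilon>\<close>. Together with the descent
  condition this bounds \<open>\<Phi>\<^sub>\<epsilon>\<^sub>k\<^sub>+\<^sub>1(u\<^sub>k\<^sub>+\<^sub>1)\<close> by \<open>Q_obj(u\<^sub>k\<^sub>+\<^sub>1) + L\<^sub>k/2 \<parallel>u\<^sub>k\<^sub>+\<^sub>1 - u\<^sub>k\<parallel>\<^sup>2\<close>.\<close>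

definition powr_tangent :: "real \<Rightarrow> real \<Rightarrow> real \<Rightarrow> real" where
  "powr_tangent q c s = c powr q + q * c powr (q - 1) * (s - c)"

lemma powr_le_powr_tangent:
  assumes "0 \<le> q" "q \<le> 1" "0 < c" "0 < s"
  shows "s powr q \<le> powr_tangent q c s"
proof -
  have "(s/c) powr q * 1 powr (1 - q) \<le> q * (s/c) + (1 - q) * 1"
    using assms by (intro Youngs_inequality_0) auto
  then have "c powr q * (s/c) powr q \<le> c powr q * (1 + q * (s/c - 1))"
    by (intro mult_left_mono) (auto simp: algebra_simps)
  moreover have "c powr q * (s/c) powr q = s powr q"
    using assms by (simp add: powr_divide)
  moreover have "c powr q * (1 + q * (s/c - 1)) = powr_tangent q c s"
    using assms unfolding powr_tangent_def by (simp add: powr_diff field_simps)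
  ultimately show ?thesis by simp
qed

lemma powr_tangent_mono:
  assumes "0 \<le> q" "q \<le> 1" "0 < a" "a \<le> b" "s \<le> a"
  shows "powr_tangent q a s \<le> powr_tangent q b s"
proof -
  have "b powr (q - 1) \<le> a powr (q - 1)"
    using assms by (intro powr_mono2') auto
  then have "q * a powr (q - 1) * (s - a) \<le> q * b powr (q - 1) * (s - a)"
    using assms by (simp add: mult_left_mono mult_right_mono_neg)
  moreover have "a powr q \<le> powr_tangent q b a"
    using assms by (intro powr_le_powr_tangent) auto
  moreover have "powr_tangent q b s = powr_tangent q b a + q * b powr (q - 1) * (s - a)"
    unfolding powr_tangent_def by (simp add: algebra_simps)
  ultimately show ?thesis
    unfolding powr_tangent_def by linarith
qed

lemma powr_eq_square_powr_half: "0 < e \<Longrightarrow> e powr r = (e\<^sup>2) powr (r / 2 :: real)"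
  by (simp add: powr_powr flip: powr_numeral)

lemma psi_eq_powr_tangent:
  assumes "0 < e"
  shows "psi p e t = (if t < e\<^sup>2 then powr_tangent (p/2) (e\<^sup>2) t else t powr (p/2))"
proof -
  have square: "e\<^sup>2 = e powr p * e powr (2 - p)"
    using assms by (simp add: powr_add[symmetric] flip: powr_numeral)
  have inverse: "e powr (p - 2) = 1 / e powr (2 - p)"
    using assms by (simp add: powr_minus_divide[symmetric])
  have "p/2 * t / e powr (2 - p) + (1 - p/2) * e powr p
      = e powr p + p/2 * e powr (p - 2) * (t - e\<^sup>2)"
    using assms unfolding square inverse by (simp add: field_simps)
  moreover have "e powr (p - 2) = (e\<^sup>2) powr (p/2 - 1)"
    using powr_eq_square_powr_half[OF assms, of "p - 2"] by (simp add: diff_divide_distrib)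
  ultimately show ?thesis
    using powr_eq_square_powr_half[OF assms, of p]
    unfolding psi_def powr_tangent_def by simp
qed

lemma psi'_eq_powr_max:
  assumes "0 < e"
  shows "psi' p e t = p/2 * (max (e\<^sup>2) t) powr (p/2 - 1)"
  using powr_eq_square_powr_half[OF assms, of "p - 2"]
  unfolding psi'_def by (simp add: diff_divide_distrib max_def)

lemma psi_le_powr_tangent:
  assumes "0 < p" "p \<le> 2" "0 < e" "0 \<le> s" "e\<^sup>2 \<le> c"
  shows "psi p e s \<le> powr_tangent (p/2) c s"
proof (cases "s < e\<^sup>2")
  case True
  then show ?thesis
    using assms powr_tangent_mono[of "p/2" "e\<^sup>2" c s] by (simp add: psi_eq_powr_tangent)
next
  case False
  with assms have "0 < s" "0 < c"
    by (smt (verit) zero_less_power)+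
  with False assms show ?thesis
    using powr_le_powr_tangent[of "p/2" c s] by (simp add: psi_eq_powr_tangent)
qed

lemma psi_le_tangent:
  assumes "0 < p" "p \<le> 2" "0 < e" "0 \<le> s" "0 \<le> t"
  shows "psi p e s \<le> psi p e t + psi' p e t * (s - t)"
proof -
  have "psi p e t + psi' p e t * (s - t) = powr_tangent (p/2) (max (e\<^sup>2) t) s"
    using assms by (auto simp: psi_eq_powr_tangent psi'_eq_powr_max powr_tangent_def field_simps)
  then show ?thesis
    using psi_le_powr_tangent[OF assms(1-4), of "max (e\<^sup>2) t"] by simp
qed

lemma psi_mono_eps:
  assumes "0 < p" "p \<le> 2" "0 < e1" "e1 \<le> e2" "0 \<le> s"
  shows "psi p e1 s \<le> psi p e2 s"
proof (cases "s < e2\<^sup>2")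
  case True
  have "e1\<^sup>2 \<le> e2\<^sup>2"
    using assms by (simp add: power_mono)
  with True assms show ?thesis
    using psi_le_powr_tangent[of p e1 s "e2\<^sup>2"] by (simp add: psi_eq_powr_tangent)
next
  case False
  then have "\<not> s < e1\<^sup>2"
    using assms by (smt (verit) power_mono)
  with False assms show ?thesis
    by (simp add: psi_eq_powr_tangent)
qed

lemma psi'_nonneg: "0 < p \<Longrightarrow> 0 \<le> psi' p e t"
  unfolding psi'_def by simp

lemma psi'_le:
  assumes "0 < p" "p \<le> 2" "0 < e"
  shows "psi' p e t \<le> p/2 * e powr (p - 2)"
proof -
  have "max (e\<^sup>2) t powr (p/2 - 1) \<le> (e\<^sup>2) powr (p/2 - 1)"
    using assms by (intro powr_mono2') auto
  then show ?thesis
    using assms powr_eq_square_powr_half[OF assms(3), of "p - 2"]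
    by (simp add: psi'_eq_powr_max diff_divide_distrib)
qed

lemma psi_nonneg: "0 < p \<Longrightarrow> p \<le> 2 \<Longrightarrow> 0 \<le> s \<Longrightarrow> 0 \<le> psi p e s"
  unfolding psi_def by (auto intro!: add_nonneg_nonneg)

lemma psi_le_affine:
  assumes "0 < p" "p \<le> 2" "0 < e" "0 \<le> s"
  shows "psi p e s \<le> e powr p + p/2 * e powr (p - 2) * s"
proof -
  have "psi p e s \<le> powr_tangent (p/2) (e\<^sup>2) s"
    using assms by (intro psi_le_powr_tangent) auto
  also have "\<dots> = e powr p + p/2 * e powr (p - 2) * (s - e\<^sup>2)"
    using powr_eq_square_powr_half[OF assms(3), of p] powr_eq_square_powr_half[OF assms(3), of "p - 2"]
    unfolding powr_tangent_def by (simp add: diff_divide_distrib)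
  also have "\<dots> \<le> e powr p + p/2 * e powr (p - 2) * s"
    using assms by (simp add: mult_left_mono)
  finally show ?thesis .
qed

lemma borel_measurable_psi [measurable]: "psi p e \<in> borel_measurable borel"
  unfolding psi_def by measurable

lemma borel_measurable_psi' [measurable]: "psi' p e \<in> borel_measurable borel"
  unfolding psi'_def by measurable

lemma quadratic_minimum_gap:
  fixes f :: "real \<Rightarrow> real"
  assumes expand: "\<And>t. f t = f 0 + t * D + t\<^sup>2 * A"
    and min: "\<And>t. f 0 \<le> f t"
  shows "f 1 = f 0 + A"
proof -
  have "D = 0"
  proof (rule ccontr)
    assume "D \<noteq> 0"
    define d where "d = 2 * \<bar>A\<bar> + 1"
    have "d > 0" "d - \<bar>A\<bar> > 0"
      unfolding d_def by simp_all
    define t where "t = - D / d"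
    have "0 \<le> t * D + t\<^sup>2 * A"
      using expand[of t] min[of t] by simp
    also have "\<dots> \<le> t * D + t\<^sup>2 * \<bar>A\<bar>"
      by (simp add: mult_left_mono)
    also have "\<dots> = - D\<^sup>2 * (d - \<bar>A\<bar>) / d\<^sup>2"
      using \<open>d > 0\<close> unfolding t_def by (simp add: field_simps power2_eq_square)
    also have "\<dots> < 0"
      using \<open>D \<noteq> 0\<close> \<open>d > 0\<close> \<open>d - \<bar>A\<bar> > 0\<close> by (simp add: divide_neg_pos)
    finally show False by simp
  qed
  then show ?thesis
    using expand[of 1] by simp
qed

lemma abs_mult_mult_le:
  fixes a f g K :: real
  assumes "\<bar>a\<bar> \<le> K"
  shows "\<bar>a * f * g\<bar> \<le> K * (f\<^sup>2 + g\<^sup>2)"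
proof -
  have "2 * \<bar>f\<bar> * \<bar>g\<bar> \<le> f\<^sup>2 + g\<^sup>2"
    using sum_squares_bound[of "\<bar>f\<bar>" "\<bar>g\<bar>"] by simp
  then have "\<bar>f\<bar> * \<bar>g\<bar> \<le> f\<^sup>2 + g\<^sup>2"
    using zero_le_mult_iff[of "\<bar>f\<bar>" "\<bar>g\<bar>"] by linarith
  then have "\<bar>a\<bar> * (\<bar>f\<bar> * \<bar>g\<bar>) \<le> K * (f\<^sup>2 + g\<^sup>2)"
    using assms by (intro mult_mono) auto
  then show ?thesis
    by (simp add: abs_mult mult.assoc)
qed

lemma integrable_bounded_mult_mult:
  fixes a f g :: "'a \<Rightarrow> real"
  assumes "a \<in> borel_measurable M" "f \<in> borel_measurable M" "g \<in> borel_measurable M"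
    and "integrable M (\<lambda>x. (f x)\<^sup>2)" "integrable M (\<lambda>x. (g x)\<^sup>2)"
    and "\<And>x. x \<in> space M \<Longrightarrow> \<bar>a x\<bar> \<le> K"
  shows "integrable M (\<lambda>x. a x * f x * g x)"
proof (rule Bochner_Integration.integrable_bound[where f="\<lambda>x. K * ((f x)\<^sup>2 + (g x)\<^sup>2)"])
  show "integrable M (\<lambda>x. K * ((f x)\<^sup>2 + (g x)\<^sup>2))"
    using assms by auto
  show "(\<lambda>x. a x * f x * g x) \<in> borel_measurable M"
    using assms by measurable
  show "AE x in M. norm (a x * f x * g x) \<le> norm (K * ((f x)\<^sup>2 + (g x)\<^sup>2))"
    using assms abs_mult_mult_le by (intro AE_I2) (metis abs_ge_self order_trans real_norm_def)
qed

lemma integrable_psi_square: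
  fixes f :: "'a \<Rightarrow> real"
  assumes "finite_measure M" "f \<in> borel_measurable M" "integrable M (\<lambda>x. (f x)\<^sup>2)"
    and "0 < p" "p \<le> 2" "0 < e"
  shows "integrable M (\<lambda>x. psi p e ((f x)\<^sup>2))"
proof (rule Bochner_Integration.integrable_bound[where f="\<lambda>x. e powr p + p/2 * e powr (p - 2) * (f x)\<^sup>2"])
  show "integrable M (\<lambda>x. e powr p + p/2 * e powr (p - 2) * (f x)\<^sup>2)"
    using assms by (auto intro!: finite_measure.integrable_const)
  show "(\<lambda>x. psi p e ((f x)\<^sup>2)) \<in> borel_measurable M"
    using assms(2) by measurable
  show "AE x in M. norm (psi p e ((f x)\<^sup>2)) \<le> norm (e powr p + p/2 * e powr (p - 2) * (f x)\<^sup>2)"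
    using assms psi_nonneg[of p] psi_le_affine[of p e] by (intro AE_I2) simp
qed

text \<open>Of the standing assumptions the descent estimate needs only these: neither compactness
  and density of the embedding, nor the regularity of \<open>\<partial>\<Omega>\<close>, nor Assumption (I) on \<open>F\<close> play a role.\<close>

locale L2_embedding =
  fixes \<Omega> :: "'a::euclidean_space set" and \<iota> :: "'v::real_inner \<Rightarrow> 'a \<Rightarrow> real"
  assumes lmeasurable_domain: "\<Omega> \<in> lmeasurable"
    and L2: "\<And>u. L2_on \<Omega> (\<iota> u)"
    and linear: "\<And>a b u v x. \<iota> (a *\<^sub>R u + b *\<^sub>R v) x = a * \<iota> u x + b * \<iota> v x"
begin

lemma sets_domain: "\<Omega> \<inter> space lebesgue \<in> sets lebesgue"
  using lmeasurable_domain by (simp add: fmeasurableD)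

lemma set_integral_eq_lebesgue_on: "(LINT x:\<Omega>|lebesgue. f x) = integral\<^sup>L (lebesgue_on \<Omega>) f"
  for f :: "'a \<Rightarrow> real"
  unfolding set_lebesgue_integral_def
  by (rule integral_restrict_space[OF sets_domain, symmetric])

lemma borel_measurable_embedding [measurable]: "\<iota> u \<in> borel_measurable (lebesgue_on \<Omega>)"
proof -
  have "(\<lambda>x. indicator \<Omega> x * \<iota> u x) \<in> borel_measurable (lebesgue_on \<Omega>)"
    using L2[of u] unfolding L2_on_def by (auto intro: measurable_restrict_space1)
  then show ?thesis
    by (rule measurable_cong[THEN iffD1, rotated]) (simp add: space_restrict_space)
qed

lemma integrable_embedding_square: "integrable (lebesgue_on \<Omega>) (\<lambda>x. (\<iota> u x)\<^sup>2)"
  using L2[of u] unfolding integrable_restrict_space[OF sets_domain]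
  by (simp add: L2_on_def set_integrable_def)

lemma embedding_diff: "\<iota> (u - v) x = \<iota> u x - \<iota> v x"
  using linear[of 1 u "-1" v x] by simp

lemma embedding_add_scaleR: "\<iota> (u + t *\<^sub>R v) x = \<iota> u x + t * \<iota> v x"
  using linear[of 1 u t v x] by simp

lemma integrable_psi_embedding:
  "0 < p \<Longrightarrow> p \<le> 2 \<Longrightarrow> 0 < e \<Longrightarrow> integrable (lebesgue_on \<Omega>) (\<lambda>x. psi p e ((\<iota> u x)\<^sup>2))"
  using finite_measure_lebesgue_on[OF lmeasurable_domain]
  by (intro integrable_psi_square integrable_embedding_square) auto

lemma integrable_psi'_embedding_mult:
  assumes "0 < p" "p \<le> 2" "0 < e"
  shows "integrable (lebesgue_on \<Omega>) (\<lambda>x. psi' p e ((\<iota> v x)\<^sup>2) * \<iota> y x * \<iota> z x)"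
  using assms psi'_nonneg[of p e] psi'_le[of p e]
  by (intro integrable_bounded_mult_mult[where K="p/2 * e powr (p - 2)"]
      integrable_embedding_square) auto

definition linearized_G :: "real \<Rightarrow> real \<Rightarrow> 'v \<Rightarrow> 'v \<Rightarrow> real" where
  "linearized_G p e v z = (LINT x:\<Omega>|lebesgue.
      psi p e ((\<iota> v x)\<^sup>2) + psi' p e ((\<iota> v x)\<^sup>2) * ((\<iota> z x)\<^sup>2 - (\<iota> v x)\<^sup>2))"

lemma Q_obj_eq_linearized_G:
  "Q_obj \<Omega> \<iota> F F' \<alpha> \<beta> p e v L z = F v + F' v (z - v) + L/2 * (norm (z - v))\<^sup>2
     + \<alpha>/2 * (norm z)\<^sup>2 + \<beta> * linearized_G p e v z"
  unfolding Q_obj_def linearized_G_def ..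

lemma linearized_G_along_line:
  fixes v w h :: 'v and t :: real
  assumes "0 < p" "p \<le> 2" "0 < e"
  defines "a \<equiv> \<lambda>x. psi' p e ((\<iota> v x)\<^sup>2)"
  shows "linearized_G p e v (w + t *\<^sub>R h) = linearized_G p e v w
           + t * (2 * (LINT x:\<Omega>|lebesgue. a x * \<iota> w x * \<iota> h x))
           + t\<^sup>2 * (LINT x:\<Omega>|lebesgue. a x * (\<iota> h x)\<^sup>2)"
proof -
  define b where "b x = psi p e ((\<iota> v x)\<^sup>2)" for x
  have integrable_b: "integrable (lebesgue_on \<Omega>) b"
    unfolding b_def by (rule integrable_psi_embedding[OF assms(1-3)])
  have integrable_a: "integrable (lebesgue_on \<Omega>) (\<lambda>x. a x * \<iota> y x * \<iota> z x)" for y z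
    unfolding a_def by (rule integrable_psi'_embedding_mult[OF assms(1-3)])
  have G_eq: "linearized_G p e v z
      = (\<integral>x. b x + (a x * \<iota> z x * \<iota> z x - a x * \<iota> v x * \<iota> v x) \<partial>lebesgue_on \<Omega>)" for z
    unfolding linearized_G_def set_integral_eq_lebesgue_on a_def b_def
    by (simp add: power2_eq_square algebra_simps)
  have "(\<lambda>x. b x + (a x * \<iota> (w + t *\<^sub>R h) x * \<iota> (w + t *\<^sub>R h) x - a x * \<iota> v x * \<iota> v x))
      = (\<lambda>x. (b x + (a x * \<iota> w x * \<iota> w x - a x * \<iota> v x * \<iota> v x))
             + (t * 2) * (a x * \<iota> w x * \<iota> h x) + t\<^sup>2 * (a x * \<iota> h x * \<iota> h x))"
    by (simp add: embedding_add_scaleR power2_eq_square algebra_simps)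
  then show ?thesis
    using integrable_a integrable_b unfolding G_eq set_integral_eq_lebesgue_on
    by (simp add: power2_eq_square mult.assoc)
qed

lemma Q_obj_minimizer_gap:
  assumes "0 < p" "p \<le> 2" "0 < e" and min: "is_Q_min \<Omega> \<iota> F F' \<alpha> \<beta> p e v L w"
  shows "Q_obj \<Omega> \<iota> F F' \<alpha> \<beta> p e v L v = Q_obj \<Omega> \<iota> F F' \<alpha> \<beta> p e v L w
           + (L + \<alpha>)/2 * (norm (w - v))\<^sup>2
           + \<beta> * (LINT x:\<Omega>|lebesgue. psi' p e ((\<iota> v x)\<^sup>2) * (\<iota> w x - \<iota> v x)\<^sup>2)"
proof -
  define h where "h = v - w"
  define Q where "Q t = Q_obj \<Omega> \<iota> F F' \<alpha> \<beta> p e v L (w + t *\<^sub>R h)" for t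
  define P where "P = (LINT x:\<Omega>|lebesgue. psi' p e ((\<iota> v x)\<^sup>2) * \<iota> w x * \<iota> h x)"
  define A where "A = (L + \<alpha>)/2 * (norm h)\<^sup>2
      + \<beta> * (LINT x:\<Omega>|lebesgue. psi' p e ((\<iota> v x)\<^sup>2) * (\<iota> h x)\<^sup>2)"
  define D where "D = F' v h - L * (norm h)\<^sup>2 + \<alpha> * inner w h + \<beta> * (2 * P)"
  have "Q t = Q 0 + t * D + t\<^sup>2 * A" for t
  proof -
    have "w + t *\<^sub>R h - v = (w - v) + t *\<^sub>R h"
      by simp
    then have derivative: "F' v (w + t *\<^sub>R h - v) = F' v (w - v) + t * F' v h"
      by (metis blinfun.add_right blinfun.scaleR_right real_scaleR_def)
    have "w + t *\<^sub>R h - v = (t - 1) *\<^sub>R h"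
      unfolding h_def by (simp add: algebra_simps)
    then have distance: "(norm (w + t *\<^sub>R h - v))\<^sup>2 = (t - 1)\<^sup>2 * (norm h)\<^sup>2"
      by (simp add: power_mult_distrib)
    have distance0: "norm (w - v) = norm h"
      unfolding h_def by (simp add: norm_minus_commute)
    have norm: "(norm (w + t *\<^sub>R h))\<^sup>2 = (norm w)\<^sup>2 + 2 * t * inner w h + t\<^sup>2 * (norm h)\<^sup>2"
      unfolding power2_norm_eq_inner
      by (simp add: inner_add_left inner_add_right inner_commute[of h w] power2_eq_square algebra_simps)
    show ?thesis
      unfolding Q_def Q_obj_eq_linearized_G linearized_G_along_line[OF assms(1-3)]
        derivative distance norm A_def D_def P_def
      by (simp add: distance0 power2_eq_square algebra_simps)
  qed
  moreover have "Q 0 \<le> Q t" for t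
    using min unfolding is_Q_min_def Q_def by simp
  ultimately have "Q 1 = Q 0 + A"
    by (rule quadratic_minimum_gap)
  moreover have "(\<iota> h x)\<^sup>2 = (\<iota> w x - \<iota> v x)\<^sup>2" for x
    unfolding h_def embedding_diff by (simp add: power2_commute)
  ultimately show ?thesis
    unfolding Q_def A_def h_def by (simp add: norm_minus_commute)
qed

lemma G_eps_le_linearized_G:
  assumes "0 < p" "p \<le> 2" "0 < e'" "e' \<le> e"
  shows "G_eps \<Omega> \<iota> p e' w \<le> linearized_G p e v w"
  unfolding G_eps_def linearized_G_def set_integral_eq_lebesgue_on power2_abs
proof (rule integral_mono)
  have "0 < e"
    using assms by simp
  then show "integrable (lebesgue_on \<Omega>) (\<lambda>x. psi p e ((\<iota> v x)\<^sup>2)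
      + psi' p e ((\<iota> v x)\<^sup>2) * ((\<iota> w x)\<^sup>2 - (\<iota> v x)\<^sup>2))"
    using assms integrable_psi_embedding integrable_psi'_embedding_mult
    by (simp add: right_diff_distrib power2_eq_square mult.assoc[symmetric])
  show "integrable (lebesgue_on \<Omega>) (\<lambda>x. psi p e' ((\<iota> w x)\<^sup>2))"
    using assms by (intro integrable_psi_embedding)
  fix x
  have "psi p e' ((\<iota> w x)\<^sup>2) \<le> psi p e ((\<iota> w x)\<^sup>2)"
    using assms by (intro psi_mono_eps) auto
  also have "\<dots> \<le> psi p e ((\<iota> v x)\<^sup>2) + psi' p e ((\<iota> v x)\<^sup>2) * ((\<iota> w x)\<^sup>2 - (\<iota> v x)\<^sup>2)"
    using assms by (intro psi_le_tangent) auto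
  finally show "psi p e' ((\<iota> w x)\<^sup>2)
      \<le> psi p e ((\<iota> v x)\<^sup>2) + psi' p e ((\<iota> v x)\<^sup>2) * ((\<iota> w x)\<^sup>2 - (\<iota> v x)\<^sup>2)" .
qed

lemma Phi_eps_le_Q_obj:
  assumes "0 < p" "p \<le> 2" "0 < e'" "e' \<le> e" "0 \<le> \<beta>" "descent_cond F F' v L w"
  shows "Phi_eps \<Omega> \<iota> F \<alpha> \<beta> p e' w \<le> Q_obj \<Omega> \<iota> F F' \<alpha> \<beta> p e v L w + L/2 * (norm (w - v))\<^sup>2"
proof -
  have "\<beta> * G_eps \<Omega> \<iota> p e' w \<le> \<beta> * linearized_G p e v w"
    using assms G_eps_le_linearized_G by (simp add: mult_left_mono)
  then show ?thesis
    using assms(6) unfolding Phi_eps_def Q_obj_eq_linearized_G descent_cond_def by simp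
qed

lemma Phi_eps_descent:
  assumes "0 < p" "p \<le> 2" "0 < e'" "e' \<le> e" "0 \<le> \<beta>"
    and "is_Q_min \<Omega> \<iota> F F' \<alpha> \<beta> p e v L w" "descent_cond F F' v L w"
  shows "Phi_eps \<Omega> \<iota> F \<alpha> \<beta> p e' w + \<alpha>/2 * (norm (w - v))\<^sup>2
           + \<beta> * (LINT x:\<Omega>|lebesgue. psi' p e ((\<iota> v x)\<^sup>2) * (\<iota> w x - \<iota> v x)\<^sup>2)
         \<le> Phi_eps \<Omega> \<iota> F \<alpha> \<beta> p e v"
proof -
  have "Phi_eps \<Omega> \<iota> F \<alpha> \<beta> p e v = Q_obj \<Omega> \<iota> F F' \<alpha> \<beta> p e v L v"
    unfolding Phi_eps_def G_eps_def Q_obj_def by simp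
  then show ?thesis
    using assms Phi_eps_le_Q_obj Q_obj_minimizer_gap[of p e] by (simp add: field_simps)
qed

end

theorem lemma7p3:
  fixes \<Omega> :: "'a::euclidean_space set"
    and \<iota> :: "'v::{real_inner,complete_space} \<Rightarrow> 'a \<Rightarrow> real"
    and F :: "'v \<Rightarrow> real" and F' :: "'v \<Rightarrow> ('v \<Rightarrow>\<^sub>L real)"
    and \<alpha> \<beta> p \<gamma> Lt :: real and \<epsilon> :: "nat \<Rightarrow> real" and u0 :: 'v
    and L :: "nat \<Rightarrow> real" and u :: "nat \<Rightarrow> 'v"
  assumes "lipschitz_domain \<Omega>"
    and "compact_dense_embedding \<Omega> \<iota>"
    and "assumption_I F F'"
    and "\<alpha> > 0" and "\<beta> > 0" and "0 < p" and "p < 1"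
    and "algorithm_A \<Omega> \<iota> F F' \<alpha> \<beta> p \<epsilon> \<gamma> Lt u0 L u"
  shows "\<forall>k. Phi_eps \<Omega> \<iota> F \<alpha> \<beta> p (\<epsilon> (Suc k)) (u (Suc k))
             + \<alpha>/2 * (norm (u (Suc k) - u k))\<^sup>2
             + \<beta> * (LINT x:\<Omega>|lebesgue. psi' p (\<epsilon> k) ((\<iota> (u k) x)\<^sup>2) * (\<iota> (u (Suc k)) x - \<iota> (u k) x)\<^sup>2)
           \<le> Phi_eps \<Omega> \<iota> F \<alpha> \<beta> p (\<epsilon> k) (u k)"
proof -
  have "\<Omega> \<in> lmeasurable"
    using assms(1) by (simp add: lipschitz_domain_def lmeasurable_open)
  moreover have "\<And>u. L2_on \<Omega> (\<iota> u)"
    and "\<And>a b u v x. \<iota> (a *\<^sub>R u + b *\<^sub>R v) x = a * \<iota> u x + b * \<iota> v x"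
    using assms(2) by (simp_all add: compact_dense_embedding_def)
  ultimately interpret L2_embedding \<Omega> \<iota>
    by unfold_locales
  have step: "0 < \<epsilon> (Suc k) \<and> \<epsilon> (Suc k) \<le> \<epsilon> k
      \<and> is_Q_min \<Omega> \<iota> F F' \<alpha> \<beta> p (\<epsilon> k) (u k) (L k) (u (Suc k))
      \<and> descent_cond F F' (u k) (L k) (u (Suc k))" for k
    using assms(8) by (auto simp: algorithm_A_def decseq_Suc_iff)
  show ?thesis
    by (intro allI Phi_eps_descent) (use step assms(5-7) in auto)
qed

end
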